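(* Let $\lambda\neq0$ be real, let $\mathcal{F}_\lambda=\{m(x)\,dx^\lambda: m\in C^\infty(S^1)\}$ with the action $L_\xi(m\,dx^\lambda)=(m\circ\xi)(\partial_x\xi)^\lambda dx^\lambda$ of $\xi\in\mathrm{Diff}(S^1)$, and let $\mathcal{M}_\lambda\subset\mathcal{F}_\lambda$ be the set of those $m\,dx^\lambda$ with $m(x)\neq0$ for all $x\in S^1$. Then the map $$m\,dx^\lambda\mapsto \mathrm{sgn}(m)\,(H_{-1})^\lambda:\ \mathcal{M}_\lambda\to\mathbb{R}\setminus\{0\},\qquad H_{-1}=\int_0^1|m|^{1/\lambda}dx,$$ is constant on the $\mathrm{Diff}(S^1)$-orbits in $\mathcal{M}_\lambda$ and induces a bijection between the orbit space $\mathcal{M}_\lambda/\mathrm{Diff}(S^1)$ and $\mathbb{R}\setminus\{0\}$.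
   Context: $S^1=\mathbb{R}/\mathbb{Z}\simeq[0,1)$; $\mathrm{Diff}(S^1)$ is the group of orientation-preserving smooth circle diffeomorphisms. Since $m$ is nowhere zero on the connected circle, $\mathrm{sgn}(m)\in\{\pm1\}$ is constant. *)

theory Defs
  imports "HOL-Analysis.Analysis"
begin

text \<open>Functions on S^1 = R/Z are represented as 1-periodic functions on R.
  C^infinity: all iterated derivatives exist everywhere.\<close>
definition smooth :: "(real \<Rightarrow> real) \<Rightarrow> bool" where
  "smooth f \<longleftrightarrow> (\<forall>k x. ((deriv ^^ k) f) differentiable (at x))"

definition periodic1 :: "(real \<Rightarrow> real) \<Rightarrow> bool" where
  "periodic1 f \<longleftrightarrow> (\<forall>x. f (x + 1) = f x)"

text \<open>Densities m dx^lambda, identified with their coefficient m.\<close>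
definition F_dens :: "(real \<Rightarrow> real) set" where
  "F_dens = {m. smooth m \<and> periodic1 m}"

definition M_dens :: "(real \<Rightarrow> real) set" where
  "M_dens = {m \<in> F_dens. \<forall>x. m x \<noteq> 0}"

text \<open>Diff(S^1) (orientation preserving), represented by lifts to R:
  smooth xi with xi(x+1) = xi(x)+1 and xi' > 0. Different lifts of the same
  circle diffeomorphism differ by an integer and act identically.\<close>
definition Diff_S1 :: "(real \<Rightarrow> real) set" where
  "Diff_S1 = {\<xi>. smooth \<xi> \<and> (\<forall>x. \<xi> (x + 1) = \<xi> x + 1) \<and> (\<forall>x. deriv \<xi> x > 0)}"

definition L_act :: "real \<Rightarrow> (real \<Rightarrow> real) \<Rightarrow> (real \<Rightarrow> real) \<Rightarrow> (real \<Rightarrow> real)" where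
  "L_act lam \<xi> m = (\<lambda>x. m (\<xi> x) * (deriv \<xi> x) powr lam)"

definition orbit_rel :: "real \<Rightarrow> ((real \<Rightarrow> real) \<times> (real \<Rightarrow> real)) set" where
  "orbit_rel lam = {(m, n). m \<in> M_dens \<and> n \<in> M_dens \<and> (\<exists>\<xi>\<in>Diff_S1. n = L_act lam \<xi> m)}"

text \<open>H_{-1} and the invariant sgn(m) * (H_{-1})^lambda; sgn(m) is the constant sign.\<close>
definition H_neg1 :: "real \<Rightarrow> (real \<Rightarrow> real) \<Rightarrow> real" where
  "H_neg1 lam m = integral {0..1} (\<lambda>x. \<bar>m x\<bar> powr (1 / lam))"

definition inv_map :: "real \<Rightarrow> (real \<Rightarrow> real) \<Rightarrow> real" where
  "inv_map lam m = sgn (m 0) * (H_neg1 lam m) powr lam"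

end

theory Submission
  imports Defs
begin

text \<open>For nowhere vanishing m the density g = |m| powr (1/lam) > 0 transforms under a lift xi as
  g(xi x) * xi' x, so H = integral of g over a period is invariant, and so is the constant sign
  of m. Conversely, the normalized primitive xi of g is a lift with xi' = g / H, and it carries
  the constant density sgn(m) H powr lam to m. Hence the invariant is complete, and the constant
  densities show that every nonzero value is attained.\<close>

section \<open>Smooth functions of one real variable\<close>

text \<open>\<open>Ck n f\<close>: the derivatives of \<open>f\<close> of order \<open>\<le> n\<close> are differentiable everywhere, i.e. \<open>f\<close>
  is \<open>n + 1\<close> times differentiable.\<close>
fun Ck :: "nat \<Rightarrow> (real \<Rightarrow> real) \<Rightarrow> bool" where
  "Ck 0 f \<longleftrightarrow> (\<forall>x. f differentiable (at x))"
| "Ck (Suc n) f \<longleftrightarrow> (\<forall>x. f differentiable (at x)) \<and> Ck n (deriv f)"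

lemma Ck_iff: "Ck n f \<longleftrightarrow> (\<forall>k\<le>n. \<forall>x. (deriv ^^ k) f differentiable (at x))"
proof (induction n arbitrary: f)
  case 0
  then show ?case by simp
next
  case (Suc n)
  have "(\<forall>k\<le>Suc n. P k) \<longleftrightarrow> P 0 \<and> (\<forall>k\<le>n. P (Suc k))" for P
    by (metis Suc_le_mono le0 not0_implies_Suc)
  then show ?case
    using Suc.IH[of "deriv f"] by (simp add: funpow_Suc_right del: funpow.simps)
qed

lemma smooth_iff_Ck: "smooth f \<longleftrightarrow> (\<forall>n. Ck n f)"
  unfolding smooth_def Ck_iff by blast

lemma Ck_DERIV: "Ck n f \<Longrightarrow> (f has_real_derivative deriv f x) (at x)"
  by (cases n) (auto simp: DERIV_deriv_iff_real_differentiable)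

lemma Ck_isCont: "Ck n f \<Longrightarrow> isCont f x"
  using Ck_DERIV DERIV_isCont by blast

lemma Ck_Suc_imp_Ck: "Ck (Suc n) f \<Longrightarrow> Ck n f"
  by (induction n arbitrary: f) auto

lemma Ck_SucI:
  assumes "\<And>x. (f has_real_derivative f' x) (at x)" and "Ck n f'"
  shows "Ck (Suc n) f"
proof -
  have "deriv f = f'"
    using assms(1) DERIV_imp_deriv by blast
  then show ?thesis
    using assms real_differentiable_def by auto
qed

lemma Ck_0I: "(\<And>x. (f has_real_derivative f' x) (at x)) \<Longrightarrow> Ck 0 f"
  unfolding Ck.simps real_differentiable_def by blast

lemma Ck_const: "Ck n (\<lambda>x. c)"
  by (induction n arbitrary: c) (auto intro!: Ck_SucI[where f'="\<lambda>x. 0"])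

lemma Ck_add: "Ck n f \<Longrightarrow> Ck n g \<Longrightarrow> Ck n (\<lambda>x. f x + g x)"
proof (induction n arbitrary: f g)
  case 0
  then show ?case by simp
next
  case (Suc n)
  then have "Ck n (\<lambda>x. deriv f x + deriv g x)"
    by simp
  then show ?case
    by (rule Ck_SucI[rotated])
       (auto intro!: derivative_eq_intros Ck_DERIV[OF Suc.prems(1)] Ck_DERIV[OF Suc.prems(2)])
qed

lemma Ck_mult: "Ck n f \<Longrightarrow> Ck n g \<Longrightarrow> Ck n (\<lambda>x. f x * g x)"
proof (induction n arbitrary: f g)
  case 0
  then show ?case by simp
next
  case (Suc n)
  then have "Ck n (\<lambda>x. deriv f x * g x + f x * deriv g x)"
    using Ck_Suc_imp_Ck[OF Suc.prems(1)] Ck_Suc_imp_Ck[OF Suc.prems(2)] by (intro Ck_add Suc.IH) simp_all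
  then show ?case
    by (rule Ck_SucI[rotated])
       (auto intro!: derivative_eq_intros Ck_DERIV[OF Suc.prems(1)] Ck_DERIV[OF Suc.prems(2)])
qed

lemma Ck_comp: "Ck n f \<Longrightarrow> Ck n g \<Longrightarrow> Ck n (\<lambda>x. f (g x))"
proof (induction n arbitrary: f g)
  case 0
  show ?case
    by (rule Ck_0I, rule DERIV_chain2[OF Ck_DERIV[OF "0"(1)] Ck_DERIV[OF "0"(2)]])
next
  case (Suc n)
  then have "Ck n (\<lambda>x. deriv f (g x))"
    using Suc.IH[of "deriv f" g] Ck_Suc_imp_Ck[OF Suc.prems(2)] by simp
  then have "Ck n (\<lambda>x. deriv f (g x) * deriv g x)"
    using Suc.prems(2) by (intro Ck_mult) simp_all
  then show ?case
    by (rule Ck_SucI[rotated]) (rule DERIV_chain2[OF Ck_DERIV[OF Suc.prems(1)] Ck_DERIV[OF Suc.prems(2)]])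
qed

lemma Ck_reciprocal:
  assumes nz: "\<And>x. h x \<noteq> 0"
  shows "Ck n h \<Longrightarrow> Ck n (\<lambda>x. 1 / h x)"
proof (induction n)
  have D: "((\<lambda>x. 1 / h x) has_real_derivative (- 1) * deriv h x * ((1 / h x) * (1 / h x))) (at x)"
    if "Ck k h" for k x
    using nz by (auto intro!: derivative_eq_intros Ck_DERIV[OF that] simp: field_simps power2_eq_square)
  {
    case 0
    show ?case
      by (rule Ck_0I[OF D[OF "0"]])
  next
    case (Suc n)
    have "Ck n (deriv h)"
      using Suc.prems by simp
    then have "Ck n (\<lambda>x. (- 1) * deriv h x)"
      by (rule Ck_mult[OF Ck_const])
    moreover have "Ck n (\<lambda>x. 1 / h x)"
      using Suc.IH[OF Ck_Suc_imp_Ck[OF Suc.prems]] .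
    ultimately have "Ck n (\<lambda>x. (- 1) * deriv h x * ((1 / h x) * (1 / h x)))"
      by (intro Ck_mult[of n "\<lambda>x. (- 1) * deriv h x"] Ck_mult[of n "\<lambda>x. 1 / h x"])
    then show ?case
      by (rule Ck_SucI[OF D[OF Suc.prems]])
  }
qed

lemma Ck_powr:
  assumes pos: "\<And>x. h x > 0"
  shows "Ck n h \<Longrightarrow> Ck n (\<lambda>x. h x powr a)"
proof (induction n arbitrary: a)
  have D: "((\<lambda>x. h x powr a) has_real_derivative a * (h x powr (a - 1) * deriv h x)) (at x)"
    if "Ck k h" for k x a
    using pos by (auto intro!: derivative_eq_intros Ck_DERIV[OF that] simp: field_simps)
  {
    case 0
    show ?case
      by (rule Ck_0I[OF D[OF "0"]])
  next
    case (Suc n)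
    have "Ck n (\<lambda>x. h x powr (a - 1))"
      using Suc.IH[OF Ck_Suc_imp_Ck[OF Suc.prems]] .
    moreover have "Ck n (deriv h)"
      using Suc.prems by simp
    ultimately have "Ck n (\<lambda>x. a * (h x powr (a - 1) * deriv h x))"
      by (intro Ck_mult Ck_const)
    then show ?case
      by (rule Ck_SucI[OF D[OF Suc.prems]])
  }
qed

lemma DERIV_inverse_function_global:
  assumes "\<And>x. (f has_real_derivative deriv f x) (at x)" and "\<And>x. deriv f x \<noteq> 0"
    and "\<And>x. f (g x) = x" and "\<And>y. g (f y) = y"
  shows "(g has_real_derivative 1 / deriv f (g y)) (at y)"
proof -
  have "isCont g (f (g y))"
    by (rule isCont_inverse_function[where f=f and g=g and x="g y" and d=1])
       (use assms(4) DERIV_isCont[OF assms(1)] in auto)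
  then have "(g has_real_derivative inverse (deriv f (g y))) (at y)"
    by (intro DERIV_inverse_function[where a="y - 1" and b="y + 1"]) (use assms in auto)
  then show ?thesis
    by (simp add: divide_inverse)
qed

lemma Ck_inverse_function:
  assumes "\<And>x. deriv f x \<noteq> 0" and "\<And>x. f (g x) = x" and "\<And>y. g (f y) = y"
  shows "Ck n f \<Longrightarrow> Ck n g"
proof (induction n)
  case 0
  show ?case
    by (rule Ck_0I, rule DERIV_inverse_function_global[OF Ck_DERIV[OF "0"] assms])
next
  case (Suc n)
  then have "Ck n (\<lambda>y. 1 / deriv f (g y))"
    using Ck_comp[OF _ Suc.IH[OF Ck_Suc_imp_Ck[OF Suc.prems]], of "deriv f"] Suc.prems
    by (intro Ck_reciprocal assms(1)) simp
  then show ?case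
    using DERIV_inverse_function_global[OF Ck_DERIV[OF Suc.prems] assms] by (intro Ck_SucI)
qed

lemma smooth_const: "smooth (\<lambda>x. c)"
  by (simp add: smooth_iff_Ck Ck_const)

lemma smooth_mult: "smooth f \<Longrightarrow> smooth g \<Longrightarrow> smooth (\<lambda>x. f x * g x)"
  by (simp add: smooth_iff_Ck Ck_mult)

lemma smooth_comp: "smooth f \<Longrightarrow> smooth g \<Longrightarrow> smooth (\<lambda>x. f (g x))"
  by (simp add: smooth_iff_Ck Ck_comp)

lemma smooth_powr: "smooth h \<Longrightarrow> (\<And>x. h x > 0) \<Longrightarrow> smooth (\<lambda>x. h x powr a)"
  by (simp add: smooth_iff_Ck Ck_powr)

lemma smooth_deriv: "smooth f \<Longrightarrow> smooth (deriv f)"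
  unfolding smooth_iff_Ck using Ck.simps(2) by blast

lemma smooth_DERIV: "smooth f \<Longrightarrow> (f has_real_derivative deriv f x) (at x)"
  by (simp add: smooth_iff_Ck Ck_DERIV)

lemma smooth_isCont: "smooth f \<Longrightarrow> isCont f x"
  by (simp add: smooth_iff_Ck Ck_isCont)

lemma smooth_primitive:
  assumes "\<And>x. (P has_real_derivative f x) (at x)" and "smooth f"
  shows "smooth P"
  using Ck_Suc_imp_Ck[OF Ck_SucI[OF assms(1)]] assms(2) unfolding smooth_iff_Ck by blast

lemma smooth_inverse_function:
  "smooth f \<Longrightarrow> (\<And>x. deriv f x \<noteq> 0) \<Longrightarrow> (\<And>x. f (g x) = x) \<Longrightarrow> (\<And>y. g (f y) = y) \<Longrightarrow> smooth g"
  using Ck_inverse_function unfolding smooth_iff_Ck by blast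

lemma continuous_imp_has_primitive:
  fixes g :: "real \<Rightarrow> real"
  assumes "\<And>x. isCont g x"
  obtains P where "\<And>x. (P has_real_derivative g x) (at x)"
proof -
  define P where "P x = integral {0..x} g - integral {x..0} g" for x
  have cont: "continuous_on S g" for S
    using assms by (simp add: continuous_at_imp_continuous_on)
  have "(P has_real_derivative g t) (at t)" for t
  proof -
    define a where "a = min (t - 1) (-1)"
    define b where "b = max (t + 1) 1"
    have ab: "a < t" "t < b" "a \<le> 0" "0 \<le> b"
      by (auto simp: a_def b_def)
    have shift: "integral {a..x} g - integral {a..0} g = P x" if "a \<le> x" for x
    proof (cases "0 \<le> x")
      case True
      then have "integral {a..0} g + integral {0..x} g = integral {a..x} g"
        using ab by (intro Henstock_Kurzweil_Integration.integral_combine integrable_continuous_interval cont) auto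
      moreover have "integral {x..0} g = 0"
        using True by (cases "x = 0") auto
      ultimately show ?thesis
        unfolding P_def by linarith
    next
      case False
      then have "integral {a..x} g + integral {x..0} g = integral {a..0} g"
        using that by (intro Henstock_Kurzweil_Integration.integral_combine integrable_continuous_interval cont) auto
      moreover have "integral {0..x} g = 0"
        using False by auto
      ultimately show ?thesis
        unfolding P_def by linarith
    qed
    have "((\<lambda>x. integral {a..x} g - integral {a..0} g) has_real_derivative g t) (at t within {a..b})"
      using integral_has_real_derivative[OF cont, of t] ab by (auto intro!: derivative_eq_intros)
    then have "(P has_real_derivative g t) (at t within {a..b})"
      by (rule has_field_derivative_transform_within[where d=1]) (use ab shift in auto)
    then show ?thesis
      using at_within_Icc_at[OF ab(1,2)] by simp
  qed
  then show ?thesis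
    using that by blast
qed

lemma has_integral_primitive:
  assumes "\<And>x. (P has_real_derivative g x) (at x)" and "a \<le> b"
  shows "(g has_integral (P b - P a)) {a..b}"
  by (rule fundamental_theorem_of_calculus[OF assms(2)])
     (use assms(1) in \<open>auto simp: has_real_derivative_iff_has_vector_derivative[symmetric]
        intro: has_field_derivative_at_within\<close>)

lemma primitive_periodic_increment:
  assumes P: "\<And>x. (P has_real_derivative g x) (at x)" and "\<And>x. g (x + 1) = g x"
  shows "P (y + 1) - P y = P 1 - P 0"
proof -
  have "((\<lambda>y. P (y + 1) - P y) has_real_derivative g (x + 1) * 1 - g x) (at x)" for x
    by (intro DERIV_diff DERIV_chain2[OF P] P) (auto intro!: derivative_eq_intros)
  then have "((\<lambda>y. P (y + 1) - P y) has_real_derivative 0) (at x)" for x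
    using assms(2) by simp
  from DERIV_isconst_all[OF allI[OF this]] show ?thesis
    by (metis add_0)
qed

lemma continuous_nonzero_sgn_eq:
  fixes m :: "real \<Rightarrow> real"
  assumes cont: "\<And>x. isCont m x" and nz: "\<And>x. m x \<noteq> 0"
  shows "sgn (m x) = sgn (m y)"
proof -
  have no_flip: False if "m u > 0" "m v < 0" for u v
  proof (cases "u \<le> v")
    case True
    have "\<exists>z\<ge>u. z \<le> v \<and> m z = 0"
      by (rule IVT2) (use that True cont in auto)
    then obtain z where "m z = 0"
      by blast
    then show False
      using nz by blast
  next
    case False
    have "\<exists>z\<ge>v. z \<le> u \<and> m z = 0"
      by (rule IVT) (use that False cont in auto)
    then obtain z where "m z = 0"
      by blast
    then show False
      using nz by blast
  qed
  show ?thesis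
    using no_flip[of x y] no_flip[of y x] nz[of x] nz[of y]
    by (cases "m x > 0"; cases "m y > 0") (auto simp: sgn_if)
qed

lemma smooth_abs: "smooth m \<Longrightarrow> (\<And>x. m x \<noteq> 0) \<Longrightarrow> smooth (\<lambda>x. \<bar>m x\<bar>)"
proof -
  assume m: "smooth m" "\<And>x. m x \<noteq> 0"
  then have "\<bar>m x\<bar> = sgn (m 0) * m x" for x
    using continuous_nonzero_sgn_eq[OF smooth_isCont, of m 0 x] by (simp add: abs_sgn mult.commute)
  then show ?thesis
    using smooth_mult[OF smooth_const m(1)] by simp
qed

section \<open>Lifts of circle diffeomorphisms\<close>

lemma Diff_S1D:
  assumes "\<xi> \<in> Diff_S1"
  shows "smooth \<xi>" and "\<xi> (x + 1) = \<xi> x + 1" and "deriv \<xi> x > 0"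
  using assms unfolding Diff_S1_def by auto

lemma Diff_S1_add_of_nat:
  assumes "\<xi> \<in> Diff_S1"
  shows "\<xi> (x + real n) = \<xi> x + real n"
proof (induction n)
  case (Suc n)
  have "\<xi> (x + real (Suc n)) = \<xi> (x + real n) + 1"
    using Diff_S1D(2)[OF assms, of "x + real n"] by (simp add: algebra_simps)
  then show ?case
    using Suc by simp
qed simp

lemma Diff_S1_strict_mono:
  assumes "\<xi> \<in> Diff_S1"
  shows "strict_mono \<xi>"
proof (rule strict_monoI)
  fix x y :: real
  assume "x < y"
  then show "\<xi> x < \<xi> y"
    by (rule DERIV_pos_imp_increasing) (use Diff_S1D[OF assms] smooth_DERIV in blast)
qed

lemma Diff_S1_surj:
  assumes "\<xi> \<in> Diff_S1"
  shows "surj \<xi>"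
proof -
  have "y \<in> range \<xi>" for y
  proof -
    define n where "n = nat \<lceil>\<bar>y - \<xi> 0\<bar>\<rceil>"
    have "\<xi> (- real n) + real n = \<xi> 0"
      using Diff_S1_add_of_nat[OF assms, of "- real n" n] by simp
    moreover have "\<xi> (real n) = \<xi> 0 + real n"
      using Diff_S1_add_of_nat[OF assms, of 0 n] by simp
    moreover have "\<bar>y - \<xi> 0\<bar> \<le> real n"
      unfolding n_def by linarith
    ultimately have "\<exists>x\<ge>- real n. x \<le> real n \<and> \<xi> x = y"
      using IVT[of \<xi> "- real n" y "real n"] smooth_isCont[OF Diff_S1D(1)[OF assms]] by auto
    then show ?thesis
      by blast
  qed
  then show ?thesis
    by blast
qed

lemma Diff_S1_deriv_periodic:
  assumes "\<xi> \<in> Diff_S1"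
  shows "deriv \<xi> (x + 1) = deriv \<xi> x"
proof -
  note \<xi> = Diff_S1D[OF assms]
  have "((\<lambda>x. \<xi> (x + 1)) has_real_derivative deriv \<xi> (x + 1) * 1) (at x)"
    by (rule DERIV_chain2[OF smooth_DERIV[OF \<xi>(1)]]) (auto intro!: derivative_eq_intros)
  moreover have "((\<lambda>x. \<xi> (x + 1)) has_real_derivative deriv \<xi> x) (at x)"
    using \<xi> smooth_DERIV[OF \<xi>(1)] by (auto intro!: derivative_eq_intros)
  ultimately show ?thesis
    using DERIV_unique by fastforce
qed

lemma deriv_comp_smooth:
  "smooth \<xi> \<Longrightarrow> smooth \<eta> \<Longrightarrow> deriv (\<lambda>x. \<xi> (\<eta> x)) x = deriv \<xi> (\<eta> x) * deriv \<eta> x"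
  by (intro DERIV_imp_deriv DERIV_chain2 smooth_DERIV)

lemma comp_in_Diff_S1: "\<xi> \<in> Diff_S1 \<Longrightarrow> \<eta> \<in> Diff_S1 \<Longrightarrow> (\<lambda>x. \<xi> (\<eta> x)) \<in> Diff_S1"
  unfolding Diff_S1_def by (auto simp: deriv_comp_smooth intro: smooth_comp)

lemma inv_in_Diff_S1:
  assumes "\<xi> \<in> Diff_S1"
  shows "inv \<xi> \<in> Diff_S1"
proof -
  note \<xi> = Diff_S1D[OF assms]
  have right: "\<xi> (inv \<xi> y) = y" for y
    using Diff_S1_surj[OF assms] by (simp add: surj_f_inv_f)
  have left: "inv \<xi> (\<xi> x) = x" for x
    using strict_mono_imp_inj_on[OF Diff_S1_strict_mono[OF assms]] by (simp add: inv_f_f)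
  have "deriv (inv \<xi>) y = 1 / deriv \<xi> (inv \<xi> y)" for y
    by (intro DERIV_imp_deriv DERIV_inverse_function_global smooth_DERIV \<xi>(1) right left)
       (use \<xi>(3) in \<open>metis less_irrefl\<close>)
  then have "deriv (inv \<xi>) y > 0" for y
    using \<xi>(3) by simp
  moreover have "smooth (inv \<xi>)"
    by (rule smooth_inverse_function[OF \<xi>(1) _ right left]) (use \<xi>(3) in \<open>metis less_irrefl\<close>)
  moreover have "inv \<xi> (y + 1) = inv \<xi> y + 1" for y
    using \<xi>(2)[of "inv \<xi> y"] right[of y] left[of "inv \<xi> y + 1"] by simp
  ultimately show ?thesis
    unfolding Diff_S1_def by blast
qed

lemma Diff_S1_comp_inv: "\<xi> \<in> Diff_S1 \<Longrightarrow> (\<lambda>x. \<xi> (inv \<xi> x)) = (\<lambda>x. x)"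
  using Diff_S1_surj by (simp add: surj_f_inv_f)

lemma Diff_S1_with_prescribed_deriv:
  assumes g: "smooth g" and per: "\<And>x. g (x + 1) = g x" and pos: "\<And>x. g x > 0"
  shows "integral {0..1} g > 0" and "\<exists>\<xi>\<in>Diff_S1. \<forall>x. deriv \<xi> x = g x / integral {0..1} g"
proof -
  obtain P where P: "\<And>x. (P has_real_derivative g x) (at x)"
    using continuous_imp_has_primitive smooth_isCont[OF g] by blast
  define H where "H = P 1 - P 0"
  have H: "integral {0..1} g = H"
    using has_integral_primitive[OF P, of 0 1] unfolding H_def by (simp add: integral_unique)
  have "P 0 < P 1"
    by (rule DERIV_pos_imp_increasing) (use P pos in auto)
  then show "integral {0..1} g > 0"
    unfolding H H_def by simp
  then have "H > 0"
    using H by simp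
  define \<xi> where "\<xi> x = (P x - P 0) / H" for x
  have d\<xi>: "(\<xi> has_real_derivative g x / H) (at x)" for x
    unfolding \<xi>_def using \<open>H > 0\<close> by (auto intro!: derivative_eq_intros P)
  then have "deriv \<xi> x = g x / H" for x
    using DERIV_imp_deriv by blast
  moreover have "smooth \<xi>"
  proof -
    have "smooth (\<lambda>x. g x * (1 / H))"
      by (intro smooth_mult g smooth_const)
    then show ?thesis
      using smooth_primitive[OF d\<xi>] by simp
  qed
  moreover have "\<xi> (x + 1) = \<xi> x + 1" for x
    using primitive_periodic_increment[OF P per, of x] \<open>H > 0\<close>
    unfolding \<xi>_def H_def by (simp add: field_simps)
  ultimately show "\<exists>\<xi>\<in>Diff_S1. \<forall>x. deriv \<xi> x = g x / integral {0..1} g"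
    unfolding Diff_S1_def H using pos \<open>H > 0\<close> by auto
qed

lemma integral_periodic_comp_Diff_S1:
  assumes cont: "\<And>x. isCont g x" and per: "\<And>x. g (x + 1) = g x" and \<xi>: "\<xi> \<in> Diff_S1"
  shows "integral {0..1} (\<lambda>x. g (\<xi> x) * deriv \<xi> x) = integral {0..1} g"
proof -
  obtain P where P: "\<And>x. (P has_real_derivative g x) (at x)"
    using continuous_imp_has_primitive cont by blast
  have "((\<lambda>x. P (\<xi> x)) has_real_derivative g (\<xi> x) * deriv \<xi> x) (at x)" for x
    by (rule DERIV_chain2[OF P smooth_DERIV[OF Diff_S1D(1)[OF \<xi>]]])
  then have "((\<lambda>x. g (\<xi> x) * deriv \<xi> x) has_integral (P (\<xi> 1) - P (\<xi> 0))) {0..1}"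
    using has_integral_primitive[of "\<lambda>x. P (\<xi> x)"] by auto
  moreover have "P (\<xi> 1) - P (\<xi> 0) = P 1 - P 0"
    using Diff_S1D(2)[OF \<xi>, of 0] primitive_periodic_increment[OF P per, of "\<xi> 0"] by simp
  ultimately show ?thesis
    using has_integral_primitive[OF P, of 0 1] by (metis integral_unique zero_le_one)
qed

section \<open>The action on densities and its invariant\<close>

lemma M_densD:
  assumes "m \<in> M_dens"
  shows "smooth m" and "m (x + 1) = m x" and "m x \<noteq> 0"
  using assms unfolding M_dens_def F_dens_def periodic1_def by auto

lemma const_in_M_dens: "c \<noteq> 0 \<Longrightarrow> (\<lambda>x. c) \<in> M_dens"
  unfolding M_dens_def F_dens_def periodic1_def using smooth_const by auto

lemma L_act_ident: "L_act lam (\<lambda>x. x) m = m"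
  unfolding L_act_def using DERIV_imp_deriv[OF DERIV_ident] by simp

lemma L_act_comp:
  assumes "\<xi> \<in> Diff_S1" and "\<eta> \<in> Diff_S1"
  shows "L_act lam \<eta> (L_act lam \<xi> m) = L_act lam (\<lambda>x. \<xi> (\<eta> x)) m"
  unfolding L_act_def
  using Diff_S1D[OF assms(1)] Diff_S1D[OF assms(2)]
  by (simp add: deriv_comp_smooth powr_mult mult.assoc)

lemma L_act_in_M_dens:
  assumes m: "m \<in> M_dens" and \<xi>: "\<xi> \<in> Diff_S1"
  shows "L_act lam \<xi> m \<in> M_dens"
proof -
  note m = M_densD[OF m] and \<xi> = Diff_S1D[OF \<xi>]
  have "smooth (\<lambda>x. m (\<xi> x))"
    by (rule smooth_comp[OF m(1) \<xi>(1)])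
  moreover have "smooth (\<lambda>x. deriv \<xi> x powr lam)"
    by (rule smooth_powr[OF smooth_deriv[OF \<xi>(1)] \<xi>(3)])
  ultimately have "smooth (L_act lam \<xi> m)"
    unfolding L_act_def by (rule smooth_mult)
  moreover have "periodic1 (L_act lam \<xi> m)"
    unfolding periodic1_def L_act_def using m \<xi> Diff_S1_deriv_periodic[OF assms(2)] by simp
  moreover have "L_act lam \<xi> m x \<noteq> 0" for x
    unfolding L_act_def using \<xi>(3) m(3) by (metis less_irrefl mult_eq_0_iff powr_eq_0_iff)
  ultimately show ?thesis
    unfolding M_dens_def F_dens_def by auto
qed

lemma smooth_abs_powr_M_dens:
  assumes "m \<in> M_dens"
  shows "smooth (\<lambda>x. \<bar>m x\<bar> powr a)" and "\<bar>m x\<bar> powr a > 0"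
  using M_densD[OF assms] by (auto intro!: smooth_powr smooth_abs)

lemma H_neg1_L_act:
  assumes lam: "lam \<noteq> 0" and m: "m \<in> M_dens" and \<xi>: "\<xi> \<in> Diff_S1"
  shows "H_neg1 lam (L_act lam \<xi> m) = H_neg1 lam m"
proof -
  define g where "g y = \<bar>m y\<bar> powr (1 / lam)" for y
  have "\<bar>L_act lam \<xi> m x\<bar> powr (1 / lam) = g (\<xi> x) * deriv \<xi> x" for x
  proof -
    have pos: "deriv \<xi> x > 0"
      using Diff_S1D(3)[OF \<xi>] .
    then have "\<bar>L_act lam \<xi> m x\<bar> powr (1 / lam) = g (\<xi> x) * (deriv \<xi> x powr lam) powr (1 / lam)"
      unfolding L_act_def g_def by (simp add: abs_mult powr_mult)
    also have "(deriv \<xi> x powr lam) powr (1 / lam) = deriv \<xi> x"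
      using pos lam by (simp add: powr_powr)
    finally show ?thesis .
  qed
  moreover have "integral {0..1} (\<lambda>x. g (\<xi> x) * deriv \<xi> x) = integral {0..1} g"
    using smooth_isCont smooth_abs_powr_M_dens(1)[OF m] M_densD(2)[OF m] \<xi>
    unfolding g_def by (intro integral_periodic_comp_Diff_S1) auto
  ultimately show ?thesis
    unfolding H_neg1_def g_def by simp
qed

lemma inv_map_L_act:
  assumes "lam \<noteq> 0" and m: "m \<in> M_dens" and \<xi>: "\<xi> \<in> Diff_S1"
  shows "inv_map lam (L_act lam \<xi> m) = inv_map lam m"
proof -
  have "sgn (L_act lam \<xi> m 0) = sgn (m (\<xi> 0))"
    unfolding L_act_def using Diff_S1D(3)[OF \<xi>, of 0] by (simp add: sgn_mult)
  also have "\<dots> = sgn (m 0)"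
    using M_densD[OF m] by (intro continuous_nonzero_sgn_eq smooth_isCont)
  finally show ?thesis
    unfolding inv_map_def H_neg1_L_act[OF assms] by simp
qed

lemma inv_map_const: "lam \<noteq> 0 \<Longrightarrow> inv_map lam (\<lambda>x. c) = c"
  unfolding inv_map_def H_neg1_def by (simp add: powr_powr sgn_mult_abs)

lemma M_dens_eq_L_act_const:
  assumes lam: "lam \<noteq> 0" and m: "m \<in> M_dens"
  shows "\<exists>\<xi>\<in>Diff_S1. m = L_act lam \<xi> (\<lambda>x. inv_map lam m)"
proof -
  define g where "g y = \<bar>m y\<bar> powr (1 / lam)" for y
  define H where "H = H_neg1 lam m"
  have g: "smooth g" "\<And>x. g x > 0" "\<And>x. g (x + 1) = g x"
    unfolding g_def using smooth_abs_powr_M_dens[OF m] M_densD[OF m] by auto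
  have "H > 0"
    using Diff_S1_with_prescribed_deriv(1)[OF g(1,3,2)] unfolding H_def H_neg1_def g_def .
  obtain \<xi> where \<xi>: "\<xi> \<in> Diff_S1" and d\<xi>: "\<And>x. deriv \<xi> x = g x / H"
    using Diff_S1_with_prescribed_deriv(2)[OF g(1,3,2)] unfolding H_def H_neg1_def g_def by blast
  have "L_act lam \<xi> (\<lambda>x. inv_map lam m) x = m x" for x
  proof -
    have "sgn (m 0) = sgn (m x)"
      using M_densD[OF m] by (intro continuous_nonzero_sgn_eq smooth_isCont)
    moreover have "(g x / H) powr lam = \<bar>m x\<bar> / H powr lam"
      using g(2)[of x] \<open>H > 0\<close> lam by (simp add: powr_divide g_def powr_powr)
    ultimately show ?thesis
      unfolding L_act_def inv_map_def d\<xi> H_def[symmetric] using \<open>H > 0\<close>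
      by (simp add: sgn_mult_abs)
  qed
  then have "L_act lam \<xi> (\<lambda>x. inv_map lam m) = m" ..
  then show ?thesis
    using \<xi> by metis
qed

lemma inv_map_nonzero:
  assumes "lam \<noteq> 0" and m: "m \<in> M_dens"
  shows "inv_map lam m \<noteq> 0"
  using M_dens_eq_L_act_const[OF assms] M_densD(3)[OF m, of 0] unfolding L_act_def by auto

lemma image_inv_map_M_dens: "lam \<noteq> 0 \<Longrightarrow> inv_map lam ` M_dens = UNIV - {0}"
  using inv_map_nonzero inv_map_const const_in_M_dens by (fastforce simp: image_iff)

section \<open>Orbit space\<close>

lemma orbit_rel_iff_inv_map_eq:
  assumes lam: "lam \<noteq> 0" and m: "m \<in> M_dens" and n: "n \<in> M_dens"
  shows "(m, n) \<in> orbit_rel lam \<longleftrightarrow> inv_map lam m = inv_map lam n"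
proof
  assume "(m, n) \<in> orbit_rel lam"
  then show "inv_map lam m = inv_map lam n"
    unfolding orbit_rel_def using inv_map_L_act[OF lam m] by auto
next
  assume eq: "inv_map lam m = inv_map lam n"
  obtain \<xi> where \<xi>: "\<xi> \<in> Diff_S1" "m = L_act lam \<xi> (\<lambda>x. inv_map lam m)"
    using M_dens_eq_L_act_const[OF lam m] by blast
  obtain \<eta> where \<eta>: "\<eta> \<in> Diff_S1" "n = L_act lam \<eta> (\<lambda>x. inv_map lam m)"
    using M_dens_eq_L_act_const[OF lam n] eq by auto
  have "L_act lam (inv \<xi>) m = (\<lambda>x. inv_map lam m)"
    by (subst \<xi>(2)) (simp add: L_act_comp \<xi>(1) inv_in_Diff_S1 Diff_S1_comp_inv L_act_ident)
  then have "n = L_act lam \<eta> (L_act lam (inv \<xi>) m)"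
    using \<eta>(2) by simp
  also have "\<dots> = L_act lam (\<lambda>x. inv \<xi> (\<eta> x)) m"
    by (rule L_act_comp[OF inv_in_Diff_S1[OF \<xi>(1)] \<eta>(1)])
  finally have "n = L_act lam (\<lambda>x. inv \<xi> (\<eta> x)) m" .
  then show "(m, n) \<in> orbit_rel lam"
    unfolding orbit_rel_def using m n \<xi>(1) \<eta>(1) by (blast intro: comp_in_Diff_S1 inv_in_Diff_S1)
qed

lemma bij_betw_quotient_complete_invariant:
  assumes r: "r \<subseteq> A \<times> A" and complete: "\<And>x y. x \<in> A \<Longrightarrow> y \<in> A \<Longrightarrow> (x, y) \<in> r \<longleftrightarrow> f x = f y"
  shows "bij_betw (\<lambda>X. the_elem (f ` X)) (A // r) (f ` A)"
    and "x \<in> A \<Longrightarrow> the_elem (f ` (r `` {x})) = f x"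
proof -
  have class_eq: "r `` {x} = {y \<in> A. f y = f x}" if "x \<in> A" for x
    using r complete[OF that] by auto
  show eval: "the_elem (f ` (r `` {x})) = f x" if "x \<in> A" for x
  proof -
    have "f ` (r `` {x}) = {f x}"
      using class_eq[OF that] that by auto
    then show ?thesis
      by simp
  qed
  show "bij_betw (\<lambda>X. the_elem (f ` X)) (A // r) (f ` A)"
  proof (rule bij_betw_imageI)
    show "inj_on (\<lambda>X. the_elem (f ` X)) (A // r)"
    proof (rule inj_onI)
      fix X Y
      assume "X \<in> A // r" "Y \<in> A // r" and eq: "the_elem (f ` X) = the_elem (f ` Y)"
      then obtain x y where "x \<in> A" "y \<in> A" and "X = r `` {x}" "Y = r `` {y}"
        by (auto elim!: quotientE)
      moreover from this have "f x = f y"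
        using eq by (simp add: eval)
      ultimately show "X = Y"
        by (simp add: class_eq)
    qed
    show "(\<lambda>X. the_elem (f ` X)) ` (A // r) = f ` A"
      unfolding quotient_def image_UN by (simp add: eval UNION_singleton_eq_range cong: SUP_cong_simp)
  qed
qed

theorem proposition4p2:
  fixes lam :: real
  assumes "lam \<noteq> 0"
  shows "(\<forall>m\<in>M_dens. \<forall>\<xi>\<in>Diff_S1. L_act lam \<xi> m \<in> M_dens \<and> inv_map lam (L_act lam \<xi> m) = inv_map lam m)
    \<and> (\<exists>G. bij_betw G (M_dens // orbit_rel lam) (UNIV - {0})
           \<and> (\<forall>m\<in>M_dens. G (orbit_rel lam `` {m}) = inv_map lam m))"
proof -
  have r: "orbit_rel lam \<subseteq> M_dens \<times> M_dens"
    unfolding orbit_rel_def by auto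
  note quotient = bij_betw_quotient_complete_invariant[OF r orbit_rel_iff_inv_map_eq[OF assms]]
  show ?thesis
    using L_act_in_M_dens inv_map_L_act[OF assms] quotient(1)[unfolded image_inv_map_M_dens[OF assms]]
      quotient(2) by blast
qed

end
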